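(* Let $W_1,\ldots,W_n$ be i.i.d. mean-zero random variables. Suppose $\mathbb{P}(|W_i|\ge\tau)\le\alpha$ and $|W_i|\le M$ almost surely, for some $\tau,M>0$ and $\alpha\ge0$. Then for any $t>2M\alpha$, \[ \mathbb{P}\Big(\Big|\frac1n\sum_{i=1}^nW_i\Big|\ge t\Big)\le2e^{-nt^2/(8\tau^2)}+n\alpha. \] *)

theory Defs
  imports "HOL-Probability.Probability"
begin

end

theory Submission
  imports Defs
begin

text \<open>
  Truncate each \<open>W\<^sub>i\<close> at level \<open>\<tau>\<close>. The sum of the truncated variables differs from
  \<open>\<Sum>W\<^sub>i\<close> only on the union of the events \<open>|W\<^sub>i| \<ge> \<tau>\<close>, which has probability at most
  \<open>n\<alpha>\<close>. The truncated variables are independent with values in \<open>[-\<tau>, \<tau>]\<close>, so Hoeffding's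
  inequality controls their deviation from their mean sum. Since \<open>W\<^sub>i\<close> has mean zero and
  \<open>|W\<^sub>i| \<le> Mb\<close>, truncation moves each mean by at most \<open>Mb \<alpha>\<close>, so the mean sum is at most
  \<open>n Mb \<alpha> < nt/2\<close>; a deviation of \<open>nt/2\<close> then costs \<open>2 exp(-nt\<^sup>2/(8\<tau>\<^sup>2))\<close>.
\<close>

definition truncate :: "real \<Rightarrow> real \<Rightarrow> real" where
  "truncate \<tau> y = (if \<bar>y\<bar> < \<tau> then y else 0)"

lemma truncate_measurable [measurable]: "truncate \<tau> \<in> borel_measurable borel"
  unfolding truncate_def by measurable

lemma abs_truncate_le: "\<bar>truncate \<tau> y\<bar> \<le> \<bar>y\<bar>"
  by (simp add: truncate_def)

lemma truncate_in_interval: "0 \<le> \<tau> \<Longrightarrow> truncate \<tau> y \<in> {-\<tau>..\<tau>}"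
  by (auto simp: truncate_def)

context prob_space
begin

lemma abs_expectation_truncate_le:
  assumes X: "X \<in> borel_measurable M"
    and bounded: "AE x in M. \<bar>X x\<bar> \<le> B"
    and mean0: "expectation X = 0"
  shows "\<bar>expectation (\<lambda>x. truncate \<tau> (X x))\<bar> \<le> B * prob {x \<in> space M. \<tau> \<le> \<bar>X x\<bar>}"
proof -
  define S where "S = {x \<in> space M. \<tau> \<le> \<bar>X x\<bar>}"
  define R where "R = (\<lambda>x. X x - truncate \<tau> (X x))"
  have S: "S \<in> sets M"
    unfolding S_def using X by measurable
  have R_bound: "AE x in M. \<bar>R x\<bar> \<le> B * indicator S x"
    using bounded AE_space by eventually_elim (auto simp: R_def S_def truncate_def)
  have int_trunc: "integrable M (\<lambda>x. truncate \<tau> (X x))"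
    using bounded X
    by (intro integrable_const_bound[where B = B])
      (auto elim!: eventually_mono intro: order_trans[OF abs_truncate_le])
  have int_X: "integrable M X"
    using bounded X by (intro integrable_const_bound[where B = B]) simp_all
  then have int_R: "integrable M R"
    using int_trunc by (simp add: R_def)
  have "expectation (\<lambda>x. truncate \<tau> (X x)) = expectation X - expectation R"
    using int_X int_trunc by (simp add: R_def Bochner_Integration.integral_diff)
  also have "\<dots> = - expectation R"
    using mean0 by simp
  finally have "\<bar>expectation (\<lambda>x. truncate \<tau> (X x))\<bar> = \<bar>expectation R\<bar>"
    by simp
  also have "\<dots> \<le> expectation (\<lambda>x. \<bar>R x\<bar>)"
    by (rule integral_abs_bound)
  also have "\<dots> \<le> expectation (\<lambda>x. B * indicator S x)"
    using int_R S R_bound by (intro integral_mono_AE) (auto simp: emeasure_eq_measure)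
  also have "\<dots> = B * prob S"
    using S by simp
  finally show ?thesis
    unfolding S_def .
qed

lemma prob_abs_sum_ge_truncate:
  assumes I: "finite I"
    and X: "\<And>i. i \<in> I \<Longrightarrow> X i \<in> borel_measurable M"
  shows "prob {x \<in> space M. a \<le> \<bar>\<Sum>i\<in>I. X i x\<bar>}
    \<le> prob {x \<in> space M. a \<le> \<bar>\<Sum>i\<in>I. truncate \<tau> (X i x)\<bar>}
      + (\<Sum>i\<in>I. prob {x \<in> space M. \<tau> \<le> \<bar>X i x\<bar>})"
proof -
  define S where "S = (\<lambda>i. {x \<in> space M. \<tau> \<le> \<bar>X i x\<bar>})"
  define T where "T = {x \<in> space M. a \<le> \<bar>\<Sum>i\<in>I. truncate \<tau> (X i x)\<bar>}"
  have S: "S i \<in> sets M" if "i \<in> I" for i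
    unfolding S_def using X[OF that] by measurable
  have T: "T \<in> sets M"
    unfolding T_def using I X by measurable
  have "{x \<in> space M. a \<le> \<bar>\<Sum>i\<in>I. X i x\<bar>} \<subseteq> T \<union> (\<Union>i\<in>I. S i)"
  proof
    fix x assume x: "x \<in> {x \<in> space M. a \<le> \<bar>\<Sum>i\<in>I. X i x\<bar>}"
    show "x \<in> T \<union> (\<Union>i\<in>I. S i)"
    proof (cases "x \<in> (\<Union>i\<in>I. S i)")
      case False
      then have "(\<Sum>i\<in>I. truncate \<tau> (X i x)) = (\<Sum>i\<in>I. X i x)"
        using x by (intro sum.cong) (auto simp: S_def truncate_def)
      then show ?thesis
        using x by (simp add: T_def)
    qed simp
  qed
  then have "prob {x \<in> space M. a \<le> \<bar>\<Sum>i\<in>I. X i x\<bar>} \<le> prob (T \<union> (\<Union>i\<in>I. S i))"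
    using S T I by (intro finite_measure_mono) auto
  also have "\<dots> \<le> prob T + prob (\<Union>i\<in>I. S i)"
    using S T I by (intro measure_Un_le) auto
  also have "prob (\<Union>i\<in>I. S i) \<le> (\<Sum>i\<in>I. prob (S i))"
    using S I by (intro finite_measure_subadditive_finite) auto
  finally show ?thesis
    unfolding S_def T_def by simp
qed

lemma abs_sum_expectation_truncate_le:
  assumes X: "\<And>i. i \<in> I \<Longrightarrow> X i \<in> borel_measurable M"
    and bounded: "\<And>i. i \<in> I \<Longrightarrow> AE x in M. \<bar>X i x\<bar> \<le> B"
    and mean0: "\<And>i. i \<in> I \<Longrightarrow> expectation (X i) = 0"
    and tail: "\<And>i. i \<in> I \<Longrightarrow> prob {x \<in> space M. \<tau> \<le> \<bar>X i x\<bar>} \<le> \<alpha>"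
    and "0 \<le> B"
  shows "\<bar>\<Sum>i\<in>I. expectation (\<lambda>x. truncate \<tau> (X i x))\<bar> \<le> real (card I) * (B * \<alpha>)"
proof -
  have "\<bar>expectation (\<lambda>x. truncate \<tau> (X i x))\<bar> \<le> B * \<alpha>" if i: "i \<in> I" for i
  proof -
    have "\<bar>expectation (\<lambda>x. truncate \<tau> (X i x))\<bar> \<le> B * prob {x \<in> space M. \<tau> \<le> \<bar>X i x\<bar>}"
      using X bounded mean0 i by (intro abs_expectation_truncate_le)
    also have "\<dots> \<le> B * \<alpha>"
      using tail[OF i] \<open>0 \<le> B\<close> by (rule mult_left_mono)
    finally show ?thesis .
  qed
  then have "(\<Sum>i\<in>I. \<bar>expectation (\<lambda>x. truncate \<tau> (X i x))\<bar>) \<le> (\<Sum>i\<in>I. B * \<alpha>)"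
    by (rule sum_mono)
  then show ?thesis
    by (simp add: order_trans[OF sum_abs])
qed

lemma Hoeffding_abs_sum_truncate_ge:
  assumes I: "finite I" "I \<noteq> {}"
    and indep: "indep_vars (\<lambda>_. borel) X I"
    and "0 < \<tau>" "0 \<le> \<epsilon>"
    and mean: "\<bar>\<Sum>i\<in>I. expectation (\<lambda>x. truncate \<tau> (X i x))\<bar> \<le> a - \<epsilon>"
  shows "prob {x \<in> space M. a \<le> \<bar>\<Sum>i\<in>I. truncate \<tau> (X i x)\<bar>}
    \<le> 2 * exp (- \<epsilon>\<^sup>2 / (2 * real (card I) * \<tau>\<^sup>2))"
proof -
  define \<mu> where "\<mu> = (\<Sum>i\<in>I. expectation (\<lambda>x. truncate \<tau> (X i x)))"
  have indep_trunc: "indep_vars (\<lambda>_. borel) (\<lambda>i x. truncate \<tau> (X i x)) I"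
    using indep by (rule indep_vars_compose2) measurable
  interpret Hoeffding_ineq M I "\<lambda>i x. truncate \<tau> (X i x)" "\<lambda>_. -\<tau>" "\<lambda>_. \<tau>" \<mu>
    unfolding \<mu>_def
    by unfold_locales (use I indep_trunc \<open>0 < \<tau>\<close> truncate_in_interval in auto)
  have "\<epsilon> \<le> \<bar>s - \<mu>\<bar>" if "a \<le> \<bar>s\<bar>" for s
    using that mean abs_triangle_ineq2[of s \<mu>] unfolding \<mu>_def by linarith
  then have "prob {x \<in> space M. a \<le> \<bar>\<Sum>i\<in>I. truncate \<tau> (X i x)\<bar>}
      \<le> prob {x \<in> space M. \<epsilon> \<le> \<bar>(\<Sum>i\<in>I. truncate \<tau> (X i x)) - \<mu>\<bar>}"
    using I by (intro finite_measure_mono) auto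
  also have "\<dots> \<le> 2 * exp (- 2 * \<epsilon>\<^sup>2 / (\<Sum>i\<in>I. (\<tau> - - \<tau>)\<^sup>2))"
    using I \<open>0 < \<tau>\<close> \<open>0 \<le> \<epsilon>\<close> by (intro Hoeffding_ineq_abs_ge) (auto simp: card_gt_0_iff)
  also have "- 2 * \<epsilon>\<^sup>2 / (\<Sum>i\<in>I. (\<tau> - - \<tau>)\<^sup>2) = - \<epsilon>\<^sup>2 / (2 * real (card I) * \<tau>\<^sup>2)"
    by (simp add: power2_eq_square)
  finally show ?thesis .
qed

end

theorem lemma15:
  fixes M :: "'a measure" and W :: "nat \<Rightarrow> 'a \<Rightarrow> real"
    and n :: nat and \<tau> Mb \<alpha> t :: real
  assumes "prob_space M"
    and meas: "\<And>i. i \<in> {1..n} \<Longrightarrow> W i \<in> borel_measurable M"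
    and indep: "prob_space.indep_vars M (\<lambda>_. borel) W {1..n}"
    and ident: "\<And>i. i \<in> {1..n} \<Longrightarrow> distr M borel (W i) = distr M borel (W 1)"
    and mean0: "\<And>i. i \<in> {1..n} \<Longrightarrow> integral\<^sup>L M (W i) = 0"
    and tail: "\<And>i. i \<in> {1..n} \<Longrightarrow> measure M {x \<in> space M. \<bar>W i x\<bar> \<ge> \<tau>} \<le> \<alpha>"
    and bdd: "\<And>i. i \<in> {1..n} \<Longrightarrow> (AE x in M. \<bar>W i x\<bar> \<le> Mb)"
    and "\<tau> > 0" and "Mb > 0" and "\<alpha> \<ge> 0"
    and "t > 2 * Mb * \<alpha>"
  shows "measure M {x \<in> space M. \<bar>(1 / real n) * (\<Sum>i=1..n. W i x)\<bar> \<ge> t}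
           \<le> 2 * exp (- (real n * t\<^sup>2) / (8 * \<tau>\<^sup>2)) + real n * \<alpha>"
proof (cases "n = 0")
  case True
  then show ?thesis
    by (simp add: order_trans[OF prob_space.prob_le_1[OF \<open>prob_space M\<close>]])
next
  case False
  interpret prob_space M by fact
  have n: "0 < real n"
    using False by simp
  have "0 \<le> 2 * Mb * \<alpha>"
    using \<open>Mb > 0\<close> \<open>\<alpha> \<ge> 0\<close> by simp
  then have "0 < t"
    using \<open>t > 2 * Mb * \<alpha>\<close> by linarith
  have "\<bar>\<Sum>i=1..n. expectation (\<lambda>x. truncate \<tau> (W i x))\<bar>
      \<le> real (card {1..n}) * (Mb * \<alpha>)"
    by (rule abs_sum_expectation_truncate_le) (use meas bdd mean0 tail \<open>Mb > 0\<close> in auto)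
  also have "\<dots> \<le> real n * t - real n * t / 2"
    using n \<open>t > 2 * Mb * \<alpha>\<close> by simp
  finally have mean: "\<bar>\<Sum>i=1..n. expectation (\<lambda>x. truncate \<tau> (W i x))\<bar>
      \<le> real n * t - real n * t / 2" .
  have "measure M {x \<in> space M. \<bar>(1 / real n) * (\<Sum>i=1..n. W i x)\<bar> \<ge> t}
      = prob {x \<in> space M. real n * t \<le> \<bar>\<Sum>i=1..n. W i x\<bar>}"
    using n by (auto simp: abs_mult field_simps intro!: arg_cong[where f = prob])
  also have "\<dots> \<le> prob {x \<in> space M. real n * t \<le> \<bar>\<Sum>i=1..n. truncate \<tau> (W i x)\<bar>}
        + (\<Sum>i=1..n. prob {x \<in> space M. \<tau> \<le> \<bar>W i x\<bar>})"
    by (rule prob_abs_sum_ge_truncate) (use meas in auto)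
  also have "prob {x \<in> space M. real n * t \<le> \<bar>\<Sum>i=1..n. truncate \<tau> (W i x)\<bar>}
      \<le> 2 * exp (- (real n * t / 2)\<^sup>2 / (2 * real n * \<tau>\<^sup>2))"
    using Hoeffding_abs_sum_truncate_ge[OF _ _ indep _ _ mean] n \<open>\<tau> > 0\<close> \<open>0 < t\<close> by simp
  also have "- (real n * t / 2)\<^sup>2 / (2 * real n * \<tau>\<^sup>2) = - (real n * t\<^sup>2) / (8 * \<tau>\<^sup>2)"
    using n by (simp add: field_simps power2_eq_square)
  also have "(\<Sum>i=1..n. prob {x \<in> space M. \<tau> \<le> \<bar>W i x\<bar>}) \<le> real n * \<alpha>"
    using sum_mono[of "{1..n}", OF tail] by simp
  finally show ?thesis
    by simp
qed

end
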